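(* In the public project problem with equal participation costs, there is no feasible Groves mechanism that welfare dominates the VCG mechanism.
   Context: Public project problem (equal participation costs): $n\ge2$ players, decisions $D=\{0,1\}$, $\Theta_i=[0,c]$ with $c>0$, $v_i(d,\theta_i)=d(\theta_i-c/n)$; efficient decision $f(\theta)=1$ iff $\sum_i\theta_i\ge c$. A Groves mechanism has taxes $t_i(\theta)=\sum_{j\ne i}v_j(f(\theta),\theta_j)+h_i(\theta_{-i})$ for arbitrary $h_i$; player $i$'s utility is $v_i(f(\theta),\theta_i)+t_i(\theta)$. The VCG (Clarke) mechanism uses $h_i(\theta_{-i})=-\max_{d\in D}\sum_{j\ne i}v_j(d,\theta_j)$. Feasible: $\sum_it_i(\theta)\le0$ for all $\theta$. $t'$ welfare dominates $t$ if $\sum_i t_i(\theta)\le\sum_i t'_i(\theta)$ for all $\theta$, strictly for some $\theta$. *)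

theory Defs
  imports Main "HOL.Real"
begin

text \<open>Players are 0,...,n-1. A type profile is a function theta :: nat => real,
  admissible if theta i is in [0,c] for every player i < n (values at indices >= n are irrelevant).\<close>

definition profiles :: "nat \<Rightarrow> real \<Rightarrow> (nat \<Rightarrow> real) set" where
  "profiles n c = {\<theta>. \<forall>i<n. \<theta> i \<in> {0..c}}"

definition val :: "nat \<Rightarrow> real \<Rightarrow> nat \<Rightarrow> real \<Rightarrow> real" where
  "val n c d t = real d * (t - c / real n)"

definition decisions :: "nat set" where
  "decisions = {0, 1}"

definition eff :: "nat \<Rightarrow> real \<Rightarrow> (nat \<Rightarrow> real) \<Rightarrow> nat" where
  "eff n c \<theta> = (if (\<Sum>i<n. \<theta> i) \<ge> c then 1 else 0)"

text \<open>h i theta is meant to depend only on theta_{-i}: this is enforced in the theorem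
  by the hypothesis depends_only_on_others.\<close>
definition depends_only_on_others :: "nat \<Rightarrow> real \<Rightarrow> (nat \<Rightarrow> (nat \<Rightarrow> real) \<Rightarrow> real) \<Rightarrow> bool" where
  "depends_only_on_others n c h \<longleftrightarrow>
     (\<forall>i<n. \<forall>\<theta>\<in>profiles n c. \<forall>\<theta>'\<in>profiles n c.
        (\<forall>j<n. j \<noteq> i \<longrightarrow> \<theta> j = \<theta>' j) \<longrightarrow> h i \<theta> = h i \<theta>')"

definition groves_tax :: "nat \<Rightarrow> real \<Rightarrow> (nat \<Rightarrow> (nat \<Rightarrow> real) \<Rightarrow> real) \<Rightarrow> nat \<Rightarrow> (nat \<Rightarrow> real) \<Rightarrow> real" where
  "groves_tax n c h i \<theta> = (\<Sum>j\<in>{..<n} - {i}. val n c (eff n c \<theta>) (\<theta> j)) + h i \<theta>"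

definition vcg_h :: "nat \<Rightarrow> real \<Rightarrow> nat \<Rightarrow> (nat \<Rightarrow> real) \<Rightarrow> real" where
  "vcg_h n c i \<theta> = - (MAX d\<in>decisions. (\<Sum>j\<in>{..<n} - {i}. val n c d (\<theta> j)))"

definition feasible :: "nat \<Rightarrow> real \<Rightarrow> (nat \<Rightarrow> (nat \<Rightarrow> real) \<Rightarrow> real) \<Rightarrow> bool" where
  "feasible n c t \<longleftrightarrow> (\<forall>\<theta>\<in>profiles n c. (\<Sum>i<n. t i \<theta>) \<le> 0)"

definition welfare_dominates :: "nat \<Rightarrow> real \<Rightarrow> (nat \<Rightarrow> (nat \<Rightarrow> real) \<Rightarrow> real) \<Rightarrow> (nat \<Rightarrow> (nat \<Rightarrow> real) \<Rightarrow> real) \<Rightarrow> bool" where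
  "welfare_dominates n c t' t \<longleftrightarrow>
     (\<forall>\<theta>\<in>profiles n c. (\<Sum>i<n. t i \<theta>) \<le> (\<Sum>i<n. t' i \<theta>)) \<and>
     (\<exists>\<theta>\<in>profiles n c. (\<Sum>i<n. t i \<theta>) < (\<Sum>i<n. t' i \<theta>))"

end

theory Submission
  imports Defs
begin

text \<open>
  Let \<open>D\<close> be the sum over all players of \<open>h\<^sub>i - h\<^sub>i\<^sup>VCG\<close>, i.e. the difference of the total
  taxes of the two mechanisms. Domination gives \<open>D \<ge> 0\<close> on all profiles, and feasibility gives
  \<open>D \<le> 0\<close> on every profile where VCG balances its budget. Since the \<open>i\<close>-th summand of \<open>D\<close> ignores
  the type of player \<open>i\<close>, the alternating sum of \<open>D\<close> over the \<open>2\<^sup>n\<close> corners of the box spanned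
  by two profiles \<open>a\<close> and \<open>b\<close> vanishes; as \<open>D \<ge> 0\<close> at the even corners, \<open>D(a) \<le> 0\<close> as soon as
  \<open>D \<le> 0\<close> at all odd corners. VCG balances its budget whenever two players report \<open>c\<close>, whenever
  one player reports \<open>c\<close> and the others' reports cover their cost share \<open>(n - 1) c / n\<close>, and
  whenever the total report is below that share. Choosing \<open>b\<close> suitably, all odd corners are of
  this kind: first for profiles \<open>a\<close> in which some player reports \<open>c\<close>, then for arbitrary \<open>a\<close>.
  Hence \<open>D \<le> 0\<close> everywhere, and the domination cannot be strict.
\<close>

lemma card_ge_2_obtains:
  assumes "2 \<le> card A"
  obtains x y where "x \<in> A" "y \<in> A" "x \<noteq> y"
proof -
  from assms obtain x B where "A = insert x B" "x \<notin> B" "1 \<le> card B"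
    using card_le_Suc_iff[of 1 A] by auto
  moreover from \<open>1 \<le> card B\<close> obtain y where "y \<in> B"
    by fastforce
  ultimately show thesis
    using that by blast
qed

lemma odd_card_cases:
  assumes "finite S" "odd (card S)"
  obtains "S = {k}" | "k \<notin> S" "S \<noteq> {}" | "2 \<le> card (S - {k})"
proof (cases "k \<in> S \<and> S \<noteq> {k}")
  case True
  then obtain s where "s \<in> S - {k}"
    by blast
  then have "0 < card (S - {k})"
    using \<open>finite S\<close> by (auto simp: card_gt_0_iff)
  moreover have "card (S - {k}) = card S - 1"
    by (rule card_Diff_singleton) (use True in blast)
  ultimately have "2 \<le> card (S - {k})"
    using \<open>odd (card S)\<close> by presburger
  then show thesis
    using that by blast
next
  case False
  moreover have "S \<noteq> {}"
    using \<open>odd (card S)\<close> by auto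
  ultimately show thesis
    using that by blast
qed

lemma sum_Pow_insert:
  assumes "finite A" "x \<notin> A"
  shows "(\<Sum>S\<in>Pow (insert x A). f S) = (\<Sum>S\<in>Pow A. f S + f (insert x S))"
proof -
  have "inj_on (insert x) (Pow A)"
    using assms(2) by (auto intro!: inj_onI)
  then show ?thesis
    unfolding Pow_insert using assms
    by (subst sum.union_disjoint) (auto simp: sum.reindex sum.distrib)
qed

lemma sum_Pow_alternating_eq_0:
  fixes g :: "'a set \<Rightarrow> 'b::comm_ring_1"
  assumes "finite I" "i \<in> I"
    and insensitive: "\<And>S. S \<subseteq> I - {i} \<Longrightarrow> g (insert i S) = g S"
  shows "(\<Sum>S\<in>Pow I. (- 1) ^ card S * g S) = 0"
proof -
  have I: "I = insert i (I - {i})"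
    using assms(2) by blast
  have "(\<Sum>S\<in>Pow I. (- 1) ^ card S * g S)
      = (\<Sum>S\<in>Pow (I - {i}). (- 1) ^ card S * g S + (- 1) ^ card (insert i S) * g (insert i S))"
    by (subst I) (rule sum_Pow_insert, use assms(1) in auto)
  also have "\<dots> = 0"
  proof (rule sum.neutral, intro ballI)
    fix S assume S: "S \<in> Pow (I - {i})"
    then have "finite S" "i \<notin> S"
      using assms(1) finite_subset by auto
    then show "(- 1) ^ card S * g S + (- 1) ^ card (insert i S) * g (insert i S) = 0"
      using insensitive S by simp
  qed
  finally show ?thesis .
qed

lemma sum_Pow_alternating_override_eq_0:
  fixes d :: "'i \<Rightarrow> ('i \<Rightarrow> 'a) \<Rightarrow> 'b::comm_ring_1"
  assumes "finite I"
    and insensitive: "\<And>i S. i \<in> I \<Longrightarrow> S \<subseteq> I \<Longrightarrow>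
      d i (override_on a b (insert i S)) = d i (override_on a b S)"
  shows "(\<Sum>S\<in>Pow I. (- 1) ^ card S * (\<Sum>i\<in>I. d i (override_on a b S))) = 0"
proof -
  have "(\<Sum>S\<in>Pow I. (- 1) ^ card S * (\<Sum>i\<in>I. d i (override_on a b S)))
      = (\<Sum>i\<in>I. \<Sum>S\<in>Pow I. (- 1) ^ card S * d i (override_on a b S))"
    by (simp add: sum_distrib_left sum.swap[where A = "Pow I"])
  also have "\<dots> = 0"
    using assms by (intro sum.neutral ballI sum_Pow_alternating_eq_0) auto
  finally show ?thesis .
qed

lemma sum_nonpos_if_nonpos_on_odd_overrides:
  fixes d :: "'i \<Rightarrow> ('i \<Rightarrow> 'a) \<Rightarrow> 'b::linordered_idom"
  assumes "finite I"
    and insensitive: "\<And>i S. i \<in> I \<Longrightarrow> S \<subseteq> I \<Longrightarrow>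
      d i (override_on a b (insert i S)) = d i (override_on a b S)"
    and nonneg: "\<And>S. S \<subseteq> I \<Longrightarrow> 0 \<le> (\<Sum>i\<in>I. d i (override_on a b S))"
    and odd: "\<And>S. S \<subseteq> I \<Longrightarrow> odd (card S) \<Longrightarrow> (\<Sum>i\<in>I. d i (override_on a b S)) \<le> 0"
  shows "(\<Sum>i\<in>I. d i a) \<le> 0"
proof -
  define f where "f S = (- 1) ^ card S * (\<Sum>i\<in>I. d i (override_on a b S))" for S
  have "(\<Sum>S\<in>Pow I. f S) = f {} + (\<Sum>S\<in>Pow I - {{}}. f S)"
    using assms(1) by (intro sum.remove) auto
  moreover have "(\<Sum>S\<in>Pow I. f S) = 0"
    unfolding f_def using assms(1) insensitive by (rule sum_Pow_alternating_override_eq_0)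
  moreover have "0 \<le> (\<Sum>S\<in>Pow I - {{}}. f S)"
  proof (rule sum_nonneg)
    fix S assume "S \<in> Pow I - {{}}"
    then show "0 \<le> f S"
      using nonneg[of S] odd[of S] by (cases "even (card S)") (auto simp: f_def)
  qed
  ultimately have "f {} \<le> 0"
    by linarith
  then show ?thesis
    by (simp add: f_def)
qed

lemma override_on_in_profiles:
  "a \<in> profiles n c \<Longrightarrow> b \<in> profiles n c \<Longrightarrow> override_on a b S \<in> profiles n c"
  by (simp add: profiles_def override_on_def)

definition others_total :: "nat \<Rightarrow> (nat \<Rightarrow> real) \<Rightarrow> nat \<Rightarrow> real" where
  "others_total n \<theta> i = (\<Sum>j\<in>{..<n} - {i}. \<theta> j)"

lemma sum_lessThan_eq_add_others_total: "k < n \<Longrightarrow> (\<Sum>i<n. \<theta> i) = \<theta> k + others_total n \<theta> k"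
  unfolding others_total_def by (simp add: sum.remove)

lemma others_total_nonneg: "\<theta> \<in> profiles n c \<Longrightarrow> 0 \<le> others_total n \<theta> i"
  unfolding others_total_def by (intro sum_nonneg) (auto simp: profiles_def)

lemma le_others_total:
  "\<theta> \<in> profiles n c \<Longrightarrow> j < n \<Longrightarrow> j \<noteq> i \<Longrightarrow> \<theta> j \<le> others_total n \<theta> i"
  unfolding others_total_def by (rule member_le_sum) (auto simp: profiles_def)

lemma others_total_le_sum: "\<theta> \<in> profiles n c \<Longrightarrow> others_total n \<theta> i \<le> (\<Sum>j<n. \<theta> j)"
  unfolding others_total_def by (rule sum_mono2) (auto simp: profiles_def)

definition others_cost :: "nat \<Rightarrow> real \<Rightarrow> real" where
  "others_cost n c = (real n - 1) * c / real n"

lemma others_cost_le: "0 \<le> c \<Longrightarrow> others_cost n c \<le> c"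
  unfolding others_cost_def by (cases "n = 0") (simp_all add: field_simps)

lemma sum_val_others:
  assumes "i < n"
  shows "(\<Sum>j\<in>{..<n} - {i}. val n c d (\<theta> j)) = real d * (others_total n \<theta> i - others_cost n c)"
  using assms
  by (simp add: val_def others_total_def others_cost_def sum_distrib_left[symmetric] sum_subtractf
      card_Diff_singleton of_nat_diff)

lemma groves_tax_vcg_h:
  assumes "i < n"
  shows "groves_tax n c (vcg_h n c) i \<theta> =
    (if c \<le> (\<Sum>j<n. \<theta> j) then others_total n \<theta> i - others_cost n c else 0)
    - max 0 (others_total n \<theta> i - others_cost n c)"
  using assms by (simp add: groves_tax_def vcg_h_def decisions_def eff_def sum_val_others)

lemma depends_only_on_others_vcg_h: "depends_only_on_others n c (vcg_h n c)"
proof (unfold depends_only_on_others_def, intro allI impI ballI)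
  fix i and \<theta> \<theta>' :: "nat \<Rightarrow> real" assume "\<forall>j<n. j \<noteq> i \<longrightarrow> \<theta> j = \<theta>' j"
  then have "(\<Sum>j\<in>{..<n} - {i}. val n c e (\<theta> j)) = (\<Sum>j\<in>{..<n} - {i}. val n c e (\<theta>' j))" for e
    by (intro sum.cong) auto
  then show "vcg_h n c i \<theta> = vcg_h n c i \<theta>'"
    by (simp add: vcg_h_def)
qed

lemma depends_only_on_others_diff:
  "depends_only_on_others n c h \<Longrightarrow> depends_only_on_others n c h' \<Longrightarrow>
    depends_only_on_others n c (\<lambda>i \<theta>. h i \<theta> - h' i \<theta>)"
  unfolding depends_only_on_others_def by metis

definition vcg_balanced :: "nat \<Rightarrow> real \<Rightarrow> (nat \<Rightarrow> real) \<Rightarrow> bool" where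
  "vcg_balanced n c \<theta> \<longleftrightarrow> (\<Sum>i<n. groves_tax n c (vcg_h n c) i \<theta>) = 0"

lemma vcg_balanced_if_type_eq_c_and_others_cost_le:
  assumes "\<theta> \<in> profiles n c" "0 \<le> c" "k < n" "\<theta> k = c"
    and covered: "others_cost n c \<le> others_total n \<theta> k"
  shows "vcg_balanced n c \<theta>"
proof -
  have "c \<le> (\<Sum>j<n. \<theta> j)"
    using sum_lessThan_eq_add_others_total[OF \<open>k < n\<close>] others_total_nonneg[OF assms(1)] assms(4)
    by simp
  moreover have "others_cost n c \<le> others_total n \<theta> i" if "i < n" for i
  proof (cases "i = k")
    case False
    with assms have "c \<le> others_total n \<theta> i"
      using le_others_total[OF assms(1,3), of i] by simp
    then show ?thesis
      using others_cost_le[OF \<open>0 \<le> c\<close>, of n] by linarith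
  qed (use covered in simp)
  ultimately show ?thesis
    unfolding vcg_balanced_def by (intro sum.neutral) (auto simp: groves_tax_vcg_h)
qed

lemma vcg_balanced_if_two_types_eq_c:
  assumes "\<theta> \<in> profiles n c" "0 \<le> c" "j < n" "k < n" "j \<noteq> k" "\<theta> j = c" "\<theta> k = c"
  shows "vcg_balanced n c \<theta>"
proof (rule vcg_balanced_if_type_eq_c_and_others_cost_le[OF assms(1,2,4,7)])
  have "c \<le> others_total n \<theta> k"
    using le_others_total[OF assms(1,3,5)] assms(6) by simp
  then show "others_cost n c \<le> others_total n \<theta> k"
    using others_cost_le[OF \<open>0 \<le> c\<close>, of n] by linarith
qed

lemma vcg_balanced_if_total_lt_others_cost:
  assumes "\<theta> \<in> profiles n c" "0 \<le> c" and uncovered: "(\<Sum>j<n. \<theta> j) < others_cost n c"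
  shows "vcg_balanced n c \<theta>"
proof -
  have "others_total n \<theta> i \<le> others_cost n c" for i
    using others_total_le_sum[OF assms(1)] uncovered by (meson less_imp_le order_trans)
  moreover have "\<not> c \<le> (\<Sum>j<n. \<theta> j)"
    using uncovered others_cost_le[OF \<open>0 \<le> c\<close>, of n] by linarith
  ultimately show ?thesis
    unfolding vcg_balanced_def by (intro sum.neutral) (simp add: groves_tax_vcg_h)
qed

locale groves_vcg_difference =
  fixes n :: nat and c :: real and d :: "nat \<Rightarrow> (nat \<Rightarrow> real) \<Rightarrow> real"
  assumes c_nonneg: "0 \<le> c"
    and depends: "depends_only_on_others n c d"
    and nonneg: "\<theta> \<in> profiles n c \<Longrightarrow> 0 \<le> (\<Sum>i<n. d i \<theta>)"
    and nonpos_if_vcg_balanced: "\<theta> \<in> profiles n c \<Longrightarrow> vcg_balanced n c \<theta> \<Longrightarrow> (\<Sum>i<n. d i \<theta>) \<le> 0"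
begin

lemma nonpos_if_nonpos_on_odd_overrides:
  assumes a: "a \<in> profiles n c" and b: "b \<in> profiles n c"
    and odd: "\<And>S. S \<subseteq> {..<n} \<Longrightarrow> odd (card S) \<Longrightarrow> (\<Sum>i<n. d i (override_on a b S)) \<le> 0"
  shows "(\<Sum>i<n. d i a) \<le> 0"
proof (rule sum_nonpos_if_nonpos_on_odd_overrides[where d = d and a = a and b = b])
  fix i S assume "i \<in> {..<n}" "S \<subseteq> {..<n}"
  then show "d i (override_on a b (insert i S)) = d i (override_on a b S)"
    by (intro depends[unfolded depends_only_on_others_def, rule_format]
        override_on_in_profiles[OF a b]) (auto simp: override_on_def)
next
  fix S
  show "0 \<le> (\<Sum>i<n. d i (override_on a b S))"
    by (intro nonneg override_on_in_profiles[OF a b])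
qed (use odd in auto)

lemma nonpos_if_type_eq_c:
  assumes a: "a \<in> profiles n c" and "k < n" "a k = c"
  shows "(\<Sum>i<n. d i a) \<le> 0"
proof (cases "others_cost n c \<le> others_total n a k")
  case True
  then show ?thesis
    using assms c_nonneg
    by (intro nonpos_if_vcg_balanced vcg_balanced_if_type_eq_c_and_others_cost_le[of _ _ _ k])
next
  case uncovered: False
  \<comment> \<open>Every odd corner except \<open>S = {k}\<close> has two types equal to \<open>c\<close>; at \<open>S = {k}\<close> the
    total type is \<open>others_total n a k\<close>, which is below \<open>others_cost n c\<close>.\<close>
  define b where "b = (\<lambda>j. if j = k then 0 else c)"
  have b: "b \<in> profiles n c"
    using c_nonneg by (auto simp: profiles_def b_def)
  show ?thesis
  proof (rule nonpos_if_nonpos_on_odd_overrides[OF a b])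
    fix S assume S: "S \<subseteq> {..<n}" and "odd (card S)"
    let ?m = "override_on a b S"
    have m: "?m \<in> profiles n c"
      using a b by (rule override_on_in_profiles)
    have "finite S"
      using S finite_subset by blast
    from this \<open>odd (card S)\<close> show "(\<Sum>i<n. d i ?m) \<le> 0"
    proof (cases rule: odd_card_cases[where k = k])
      case 1
      have "(\<Sum>j<n. ?m j) = others_total n a k"
        using sum_lessThan_eq_add_others_total[OF \<open>k < n\<close>, of ?m] 1
        by (simp add: b_def others_total_def)
      then show ?thesis
        using uncovered m c_nonneg
        by (intro nonpos_if_vcg_balanced vcg_balanced_if_total_lt_others_cost) auto
    next
      case 2
      then obtain s where "s \<in> S" "s \<noteq> k"
        by blast
      then show ?thesis
        using 2 m S assms c_nonneg
        by (intro nonpos_if_vcg_balanced vcg_balanced_if_two_types_eq_c[of _ _ _ s k]) (auto simp: b_def)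
    next
      case 3
      then obtain x y where "x \<in> S - {k}" "y \<in> S - {k}" "x \<noteq> y"
        by (rule card_ge_2_obtains)
      then show ?thesis
        using m S c_nonneg
        by (intro nonpos_if_vcg_balanced vcg_balanced_if_two_types_eq_c[of _ _ _ x y]) (auto simp: b_def)
    qed
  qed
qed

lemma nonpos:
  assumes a: "a \<in> profiles n c"
  shows "(\<Sum>i<n. d i a) \<le> 0"
proof (rule nonpos_if_nonpos_on_odd_overrides[OF a])
  show b: "(\<lambda>_. c) \<in> profiles n c"
    using c_nonneg by (simp add: profiles_def)
  fix S assume S: "S \<subseteq> {..<n}" and "odd (card S)"
  have m: "override_on a (\<lambda>_. c) S \<in> profiles n c"
    using a b by (rule override_on_in_profiles)
  show "(\<Sum>i<n. d i (override_on a (\<lambda>_. c) S)) \<le> 0"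
  proof (cases "card S = 1")
    case True
    then obtain k where "S = {k}"
      by (auto simp: card_1_singleton_iff)
    then show ?thesis
      using nonpos_if_type_eq_c[OF m, of k] S by simp
  next
    case False
    with \<open>odd (card S)\<close> have "2 \<le> card S"
      by presburger
    then obtain x y where "x \<in> S" "y \<in> S" "x \<noteq> y"
      by (rule card_ge_2_obtains)
    then show ?thesis
      using m S c_nonneg
      by (intro nonpos_if_vcg_balanced vcg_balanced_if_two_types_eq_c[of _ _ _ x y]) auto
  qed
qed

end

theorem theorem3:
  fixes n :: nat and c :: real and h :: "nat \<Rightarrow> (nat \<Rightarrow> real) \<Rightarrow> real"
  assumes "n \<ge> 2" and "c > 0"
    and "depends_only_on_others n c h"
    and "feasible n c (groves_tax n c h)"
  shows "\<not> welfare_dominates n c (groves_tax n c h) (groves_tax n c (vcg_h n c))"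
proof
  assume dominates: "welfare_dominates n c (groves_tax n c h) (groves_tax n c (vcg_h n c))"
  define d where "d i \<theta> = h i \<theta> - vcg_h n c i \<theta>" for i \<theta>
  have tax_difference: "(\<Sum>i<n. d i \<theta>) =
      (\<Sum>i<n. groves_tax n c h i \<theta>) - (\<Sum>i<n. groves_tax n c (vcg_h n c) i \<theta>)" for \<theta>
    by (simp add: d_def groves_tax_def sum_subtractf sum.distrib)
  interpret groves_vcg_difference n c d
  proof
    show "0 \<le> c"
      using assms(2) by simp
    show "depends_only_on_others n c d"
      unfolding d_def using assms(3) depends_only_on_others_vcg_h by (rule depends_only_on_others_diff)
    show "0 \<le> (\<Sum>i<n. d i \<theta>)" if "\<theta> \<in> profiles n c" for \<theta>
      using dominates that unfolding welfare_dominates_def tax_difference by simp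
    show "(\<Sum>i<n. d i \<theta>) \<le> 0" if "\<theta> \<in> profiles n c" "vcg_balanced n c \<theta>" for \<theta>
      using assms(4) that unfolding feasible_def vcg_balanced_def tax_difference by simp
  qed
  from dominates obtain \<theta> where "\<theta> \<in> profiles n c" "0 < (\<Sum>i<n. d i \<theta>)"
    unfolding welfare_dominates_def tax_difference by auto
  with nonpos[of \<theta>] show False
    by simp
qed

end
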